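(* Let $0<\sigma<\infty$, let $f$ be an exposed point of $D(B^1_\sigma)$ with exposing functional $\Phi_f(g)=\int_{\mathbb{R}}g(x)\,\overline{f(x)}/|f(x)|\,dx$. Let $f_n\in D(B^1_\sigma)$, $n\in\mathbb{N}$, with $\lim_{n\to\infty}\Phi_f(f_n)=1$. If $(f_n)$ converges uniformly on compact subsets of $\mathbb{R}$ to some $f_0\in D(B^1_\sigma)$, then there exists $\alpha$ with $0\le\alpha\le1$ such that $f_0=\alpha f$.
   Context: For $0<\sigma<\infty$, $B^1_\sigma$ is the space of $f\in L^1(\mathbb{R})$ whose Fourier transform is supported in $[-\sigma,\sigma]$, with the $L^1(\mathbb{R})$ norm; its elements are continuous (indeed entire) functions. $D(B^1_\sigma)$ is its closed unit ball. A point $f\in D(B^1_\sigma)$ is exposed if there is a continuous linear functional $\Phi$ on $B^1_\sigma$ with $\Phi(f)=\|\Phi\|=1$ and $\mathrm{Re}\,\Phi(g)<1$ for all $g\in D(B^1_\sigma)$, $g\ne f$; this functional is unique and equals $g\mapsto\int_{\mathbb{R}}g(x)\overline{f(x)}/|f(x)|\,dx$ (the integrand defined almost everywhere). *)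

theory Defs
  imports "HOL-Analysis.Analysis"
begin

definition fourier :: "(real \<Rightarrow> complex) \<Rightarrow> real \<Rightarrow> complex" where
  "fourier f \<xi> = (LINT x|lborel. f x * exp (- (\<i> * complex_of_real (x * \<xi>))))"

definition L1norm :: "(real \<Rightarrow> complex) \<Rightarrow> real" where
  "L1norm f = (LINT x|lborel. cmod (f x))"

text \<open>The space B^1_sigma, elements represented by their continuous representative.\<close>
definition B1 :: "real \<Rightarrow> (real \<Rightarrow> complex) set" where
  "B1 \<sigma> = {f. continuous_on UNIV f \<and> integrable lborel f \<and>
                (\<forall>\<xi>. \<bar>\<xi>\<bar> > \<sigma> \<longrightarrow> fourier f \<xi> = 0)}"

definition DB1 :: "real \<Rightarrow> (real \<Rightarrow> complex) set" where
  "DB1 \<sigma> = {f \<in> B1 \<sigma>. L1norm f \<le> 1}"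

definition clin_functional_on_B1 :: "real \<Rightarrow> ((real \<Rightarrow> complex) \<Rightarrow> complex) \<Rightarrow> bool" where
  "clin_functional_on_B1 \<sigma> \<Phi> \<longleftrightarrow>
     (\<forall>g\<in>B1 \<sigma>. \<forall>h\<in>B1 \<sigma>. \<Phi> (\<lambda>x. g x + h x) = \<Phi> g + \<Phi> h) \<and>
     (\<forall>g\<in>B1 \<sigma>. \<forall>c::complex. \<Phi> (\<lambda>x. c * g x) = c * \<Phi> g) \<and>
     (\<exists>C. \<forall>g\<in>B1 \<sigma>. cmod (\<Phi> g) \<le> C * L1norm g)"

text \<open>Given Phi f = 1 and norm f \<le> 1,
  norm Phi = 1 amounts to norm Phi \<le> 1, i.e. cmod (Phi g) \<le> L1norm g.\<close>
definition exposed_point :: "real \<Rightarrow> (real \<Rightarrow> complex) \<Rightarrow> bool" where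
  "exposed_point \<sigma> f \<longleftrightarrow> f \<in> DB1 \<sigma> \<and>
     (\<exists>\<Phi>. clin_functional_on_B1 \<sigma> \<Phi> \<and>
          (\<forall>g\<in>B1 \<sigma>. cmod (\<Phi> g) \<le> L1norm g) \<and>
          \<Phi> f = 1 \<and>
          (\<forall>g\<in>DB1 \<sigma>. g \<noteq> f \<longrightarrow> Re (\<Phi> g) < 1))"

definition Phi :: "(real \<Rightarrow> complex) \<Rightarrow> (real \<Rightarrow> complex) \<Rightarrow> complex" where
  "Phi f g = (LINT x|lborel. g x * cnj (f x) / complex_of_real (cmod (f x)))"

end

(*
  For s = sgn (cnj f), the pointwise defect |u| - Re (u s) is nonnegative and integrates to
  L1norm u - Re (Phi f u), so for the f_n in the unit ball these integrals tend to 0. The defect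
  is 2-Lipschitz in u, so locally uniform convergence carries this to f_0: its defect vanishes
  a.e., i.e. f_0(x) is a nonnegative multiple of f(x) almost everywhere. If f_0 is not 0,
  normalise it to g. Since g is aligned with f, the L1 norm of f - g/m can be computed exactly,
  and testing the exposing functional \<Phi> on it gives
  Re (\<Phi> g) >= 1 - 2 * integral of max 0 (|g| - m |f|), which tends to 1 by dominated
  convergence; exposedness then forces g = f.
*)

theory Submission
  imports Defs
begin

lemma integrable_fourier_integrand:
  fixes g :: "real \<Rightarrow> complex"
  assumes "integrable lborel g"
  shows "integrable lborel (\<lambda>x. g x * exp (- (\<i> * complex_of_real (x * \<xi>))))"
proof (rule Bochner_Integration.integrable_bound[OF assms])
  have [measurable]: "g \<in> borel_measurable lborel"
    using assms by (rule borel_measurable_integrable)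
  show "(\<lambda>x. g x * exp (- (\<i> * complex_of_real (x * \<xi>)))) \<in> borel_measurable lborel"
    by measurable
qed (simp add: norm_mult)

lemma fourier_add:
  assumes "integrable lborel g" "integrable lborel h"
  shows "fourier (\<lambda>x. g x + h x) \<xi> = fourier g \<xi> + fourier h \<xi>"
  unfolding fourier_def distrib_right
  using assms by (intro Bochner_Integration.integral_add integrable_fourier_integrand)

lemma B1_add: "g \<in> B1 \<sigma> \<Longrightarrow> h \<in> B1 \<sigma> \<Longrightarrow> (\<lambda>x. g x + h x) \<in> B1 \<sigma>"
  by (auto simp: B1_def fourier_add intro!: continuous_intros)

lemma B1_scale: "g \<in> B1 \<sigma> \<Longrightarrow> (\<lambda>x. c * g x) \<in> B1 \<sigma>"
  unfolding B1_def fourier_def by (auto intro!: continuous_intros simp: mult.assoc)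

lemma L1norm_nonneg: "0 \<le> L1norm u"
  unfolding L1norm_def by simp

lemma L1norm_scale: "L1norm (\<lambda>x. c * u x) = cmod c * L1norm u"
  unfolding L1norm_def norm_mult by (rule integral_mult_right_zero)

lemma continuous_AE_eq_0_imp_eq_0:
  fixes g :: "real \<Rightarrow> 'a::real_normed_vector"
  assumes "continuous_on UNIV g" "AE x in lborel. g x = 0"
  shows "g = (\<lambda>x. 0)"
proof (rule ccontr)
  assume "g \<noteq> (\<lambda>x. 0)"
  then obtain x where "g x \<noteq> 0" by auto
  moreover have "open {y. g y \<noteq> 0}"
    using assms(1) by (intro open_Collect_neq) (auto intro: continuous_intros)
  ultimately obtain e where e: "e > 0" "ball x e \<subseteq> {y. g y \<noteq> 0}"
    by (auto simp: open_contains_ball)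
  from assms(2) obtain N where N: "{y. g y \<noteq> 0} \<subseteq> N" "N \<in> null_sets lborel"
    by (auto elim!: AE_E simp: null_sets_def)
  have "emeasure lborel (ball x e) \<le> emeasure lborel N"
    using e N by (intro emeasure_mono) auto
  moreover have "emeasure lborel (ball x e) = ennreal (2 * e)"
    using e by (simp add: ball_eq_greaterThanLessThan)
  ultimately show False
    using e N by (simp add: null_setsD1)
qed

lemma L1norm_eq_0_imp_eq_0:
  assumes "continuous_on UNIV u" "integrable lborel u" "L1norm u = 0"
  shows "u = (\<lambda>x. 0)"
proof (rule continuous_AE_eq_0_imp_eq_0[OF assms(1)])
  have "AE x in lborel. cmod (u x) = 0"
    using assms(2,3) integral_nonneg_eq_0_iff_AE[of lborel "\<lambda>x. cmod (u x)"]
    by (simp add: L1norm_def)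
  then show "AE x in lborel. u x = 0"
    by simp
qed

lemma exposed_point_L1norm: "exposed_point \<sigma> f \<Longrightarrow> L1norm f = 1"
  unfolding exposed_point_def DB1_def by force

lemma integrable_mult_sgn_cnj:
  fixes u f :: "real \<Rightarrow> complex"
  assumes "integrable lborel u" "f \<in> borel_measurable lborel"
  shows "integrable lborel (\<lambda>x. u x * sgn (cnj (f x)))"
proof (rule Bochner_Integration.integrable_bound[OF assms(1)])
  have "(\<lambda>x. cnj (f x)) \<in> borel_measurable lborel"
    using assms(2) by (rule measurable_compose[OF _ borel_measurable_continuous_onI])
      (intro continuous_intros)
  then show "(\<lambda>x. u x * sgn (cnj (f x))) \<in> borel_measurable lborel"
    using assms(1) by measurable
qed (simp add: norm_mult norm_sgn)

lemma Phi_eq_integral_sgn: "Phi f u = (LINT x|lborel. u x * sgn (cnj (f x)))"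
  by (simp add: Phi_def sgn_eq)

text \<open>The defect vanishes at x iff u x is a nonnegative real multiple of f x
  (and u x = 0 where f x = 0).\<close>
definition alignment_defect :: "(real \<Rightarrow> complex) \<Rightarrow> (real \<Rightarrow> complex) \<Rightarrow> real \<Rightarrow> real" where
  "alignment_defect f u x = cmod (u x) - Re (u x * sgn (cnj (f x)))"

lemma alignment_defect_nonneg: "0 \<le> alignment_defect f u x"
proof -
  have "Re (u x * sgn (cnj (f x))) \<le> cmod (u x * sgn (cnj (f x)))"
    by (rule complex_Re_le_cmod)
  also have "\<dots> \<le> cmod (u x)"
    by (simp add: norm_mult norm_sgn)
  finally show ?thesis
    by (simp add: alignment_defect_def)
qed

lemma alignment_defect_le:
  "alignment_defect f u x \<le> alignment_defect f v x + 2 * cmod (u x - v x)"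
proof -
  define s where "s = sgn (cnj (f x))"
  have "\<bar>Re ((u x - v x) * s)\<bar> \<le> cmod ((u x - v x) * s)"
    by (rule abs_Re_le_cmod)
  also have "\<dots> \<le> cmod (u x - v x)"
    by (simp add: s_def norm_mult norm_sgn)
  finally have "\<bar>Re (u x * s) - Re (v x * s)\<bar> \<le> cmod (u x - v x)"
    by (simp only: left_diff_distrib minus_complex.sel)
  then show ?thesis
    using norm_triangle_sub[of "u x" "v x"] unfolding alignment_defect_def s_def[symmetric]
    by linarith
qed

lemma alignment_defect_scale:
  "0 \<le> c \<Longrightarrow> alignment_defect f (\<lambda>x. complex_of_real c * u x) x = c * alignment_defect f u x"
  by (simp add: alignment_defect_def norm_mult right_diff_distrib mult.assoc)

lemma alignment_defect_eq_0_imp_aligned: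
  assumes "alignment_defect f u x = 0"
  shows "u x = complex_of_real (cmod (u x) / cmod (f x)) * f x"
proof (cases "f x = 0")
  case True
  then show ?thesis
    using assms by (simp add: alignment_defect_def)
next
  case False
  define s where "s = sgn (cnj (f x))"
  have "u x * s \<in> \<real>\<^sub>\<ge>\<^sub>0"
    using assms unfolding norm_eq_Re_iff[symmetric]
    by (simp add: alignment_defect_def s_def norm_mult norm_sgn)
  then obtain r where "u x * s = complex_of_real r" "0 \<le> r"
    by (rule nonneg_Reals_cases)
  moreover have "cmod (u x * s) = cmod (u x)"
    using False by (simp add: s_def norm_mult norm_sgn)
  ultimately have us: "u x * s = complex_of_real (cmod (u x))"
    by simp
  have "s * f x = cnj (f x) * f x / complex_of_real (cmod (f x))"
    by (simp add: s_def sgn_eq)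
  also have "cnj (f x) * f x = complex_of_real (cmod (f x)) * complex_of_real (cmod (f x))"
    by (simp add: complex_norm_square[symmetric] power2_eq_square mult.commute)
  finally have sf: "s * f x = complex_of_real (cmod (f x))"
    using False by simp
  have "u x * complex_of_real (cmod (f x)) = complex_of_real (cmod (u x)) * f x"
    by (metis us sf mult.assoc)
  then show ?thesis
    using False by (simp add: field_simps)
qed

lemma integrable_alignment_defect:
  assumes "integrable lborel u" "f \<in> borel_measurable lborel"
  shows "integrable lborel (alignment_defect f u)"
  unfolding alignment_defect_def[abs_def]
  using assms by (intro Bochner_Integration.integrable_diff integrable_norm integrable_Re
      integrable_mult_sgn_cnj) auto

lemma integral_alignment_defect:
  assumes "integrable lborel u" "f \<in> borel_measurable lborel"
  shows "integral\<^sup>L lborel (alignment_defect f u) = L1norm u - Re (Phi f u)"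
proof -
  have int: "integrable lborel (\<lambda>x. u x * sgn (cnj (f x)))"
    using assms by (intro integrable_mult_sgn_cnj) auto
  have "integral\<^sup>L lborel (alignment_defect f u)
      = L1norm u - integral\<^sup>L lborel (\<lambda>x. Re (u x * sgn (cnj (f x))))"
    unfolding alignment_defect_def[abs_def] L1norm_def
    using assms(1) int by (intro Bochner_Integration.integral_diff integrable_norm integrable_Re)
  then show ?thesis
    by (simp only: integral_Re[OF int] Phi_eq_integral_sgn)
qed

lemma integral_indicator_alignment_defect_le:
  fixes u v :: "real \<Rightarrow> complex"
  assumes f: "f \<in> borel_measurable lborel"
    and u: "integrable lborel u" and v: "integrable lborel v"
    and K: "K \<in> sets lborel" "emeasure lborel K < \<infinity>"
    and close: "\<And>x. x \<in> K \<Longrightarrow> cmod (u x - v x) \<le> e"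
  shows "(LINT x|lborel. alignment_defect f u x * indicator K x)
    \<le> integral\<^sup>L lborel (alignment_defect f v) + 2 * e * measure lborel K"
proof -
  have K_int: "integrable lborel (indicator K :: real \<Rightarrow> real)"
    using K by (simp add: integrable_indicator_iff)
  have "alignment_defect f u x * indicator K x \<le> alignment_defect f v x + 2 * e * indicator K x" for x
    using alignment_defect_le[of f u x v] close[of x] alignment_defect_nonneg[of f v x]
    by (cases "x \<in> K") auto
  then have "(LINT x|lborel. alignment_defect f u x * indicator K x)
      \<le> (LINT x|lborel. alignment_defect f v x + 2 * e * indicator K x)"
    using f u v K K_int
    by (intro Bochner_Integration.integral_mono Bochner_Integration.integrable_add
        integrable_mult_right integrable_alignment_defect integrable_real_mult_indicator)
  also have "\<dots> = integral\<^sup>L lborel (alignment_defect f v) + 2 * e * measure lborel K"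
    using f v K K_int by (simp add: integrable_alignment_defect)
  finally show ?thesis .
qed

lemma AE_alignment_defect_eq_0_on_compact:
  fixes u :: "nat \<Rightarrow> real \<Rightarrow> complex"
  assumes f: "f \<in> borel_measurable lborel"
    and u: "\<And>n. integrable lborel (u n)" and u0: "integrable lborel u0"
    and defect_lim: "(\<lambda>n. integral\<^sup>L lborel (alignment_defect f (u n))) \<longlonglongrightarrow> 0"
    and K: "compact K" and unif: "uniform_limit K u u0 sequentially"
  shows "AE x in lborel. x \<in> K \<longrightarrow> alignment_defect f u0 x = 0"
proof -
  have K_sets: "K \<in> sets lborel"
    using K by (simp add: compact_imp_closed)
  have K_fin: "emeasure lborel K < \<infinity>"
    using K by (intro emeasure_bounded_finite compact_imp_bounded)
  define d where "d x = alignment_defect f u0 x * indicator K x" for x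
  have d_int: "integrable lborel d"
    unfolding d_def using K_sets
    by (intro integrable_real_mult_indicator integrable_alignment_defect u0 f)
  have d_nonneg: "0 \<le> d x" for x
    by (simp add: d_def alignment_defect_nonneg)
  have d_bound: "integral\<^sup>L lborel d \<le> 2 * e * measure lborel K" if "e > 0" for e
  proof (rule tendsto_le[OF trivial_limit_sequentially])
    show "(\<lambda>n. integral\<^sup>L lborel (alignment_defect f (u n)) + 2 * e * measure lborel K)
        \<longlonglongrightarrow> 2 * e * measure lborel K"
      using tendsto_add[OF defect_lim tendsto_const] by simp
    show "\<forall>\<^sub>F n in sequentially.
        integral\<^sup>L lborel d \<le> integral\<^sup>L lborel (alignment_defect f (u n)) + 2 * e * measure lborel K"
      using uniform_limitD[OF unif \<open>e > 0\<close>]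
    proof eventually_elim
      case (elim n)
      then show ?case
        unfolding d_def using f u0 u K_sets K_fin
        by (intro integral_indicator_alignment_defect_le) (auto simp: dist_norm norm_minus_commute)
    qed
  qed simp
  have "integral\<^sup>L lborel d \<le> 0"
  proof (rule tendsto_le[OF trivial_limit_at_right_real _ tendsto_const])
    show "((\<lambda>e. 2 * e * measure lborel K) \<longlongrightarrow> 0) (at_right 0)"
      by (auto intro!: tendsto_eq_intros)
    show "\<forall>\<^sub>F e in at_right 0. integral\<^sup>L lborel d \<le> 2 * e * measure lborel K"
      by (intro eventually_at_rightI[of 0 1] d_bound) auto
  qed
  then have "AE x in lborel. d x = 0"
    using d_int d_nonneg integral_nonneg_eq_0_iff_AE[of lborel d]
    by (simp add: antisym integral_nonneg_AE)
  then show ?thesis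
    by eventually_elim (auto simp: d_def)
qed

lemma AE_alignment_defect_eq_0:
  fixes u :: "nat \<Rightarrow> real \<Rightarrow> complex"
  assumes "f \<in> borel_measurable lborel"
    and "\<And>n. integrable lborel (u n)" "integrable lborel u0"
    and "(\<lambda>n. integral\<^sup>L lborel (alignment_defect f (u n))) \<longlonglongrightarrow> 0"
    and "\<And>K. compact K \<Longrightarrow> uniform_limit K u u0 sequentially"
  shows "AE x in lborel. alignment_defect f u0 x = 0"
proof -
  have "AE x in lborel. \<forall>R::nat. x \<in> cball 0 (real R) \<longrightarrow> alignment_defect f u0 x = 0"
    unfolding AE_all_countable
    using assms by (intro allI AE_alignment_defect_eq_0_on_compact) auto
  then show ?thesis
  proof eventually_elim
    case (elim x)
    obtain R :: nat where "\<bar>x\<bar> \<le> real R"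
      using real_arch_simple by blast
    then show ?case
      using elim by (auto simp: dist_real_def)
  qed
qed

lemma cmod_diff_aligned:
  fixes z w :: complex and s :: real
  assumes w: "w = complex_of_real (cmod w / cmod z) * z" and s: "0 < s"
  shows "cmod (z - w / complex_of_real s) = cmod z - (cmod w - 2 * max 0 (cmod w - s * cmod z)) / s"
proof (cases "z = 0")
  case True
  then show ?thesis
    using w by simp
next
  case False
  have "z - w / complex_of_real s = complex_of_real (1 - cmod w / cmod z / s) * z"
    by (subst w) (simp add: algebra_simps)
  then have "cmod (z - w / complex_of_real s) = \<bar>(1 - cmod w / cmod z / s) * cmod z\<bar>"
    by (simp only: norm_mult norm_of_real abs_mult abs_norm_cancel)
  also have "(1 - cmod w / cmod z / s) * cmod z = cmod z - cmod w / s"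
    using False by (simp add: field_simps)
  also have "\<bar>cmod z - cmod w / s\<bar> = cmod z - cmod w / s + 2 * max 0 (cmod w / s - cmod z)"
    by (auto simp: max_def)
  also have "max 0 (cmod w / s - cmod z) = max 0 (cmod w - s * cmod z) / s"
    using s by (simp add: max_def field_simps)
  also have "cmod z - cmod w / s + 2 * (max 0 (cmod w - s * cmod z) / s)
      = cmod z - (cmod w - 2 * max 0 (cmod w - s * cmod z)) / s"
    using s by (simp add: field_simps)
  finally show ?thesis .
qed

lemma integral_excess_tendsto_0:
  fixes f g :: "real \<Rightarrow> complex"
  assumes g: "integrable lborel g" and f: "f \<in> borel_measurable lborel"
    and vanish: "AE x in lborel. f x = 0 \<longrightarrow> g x = 0"
  shows "(\<lambda>m. LINT x|lborel. max 0 (cmod (g x) - real m * cmod (f x))) \<longlonglongrightarrow> 0"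
proof -
  have "(\<lambda>m. LINT x|lborel. max 0 (cmod (g x) - real m * cmod (f x)))
      \<longlonglongrightarrow> (LINT (x::real)|lborel. 0)"
  proof (rule Bochner_Integration.integral_dominated_convergence[where w = "\<lambda>x. cmod (g x)"])
    show "AE x in lborel. (\<lambda>m. max 0 (cmod (g x) - real m * cmod (f x))) \<longlonglongrightarrow> 0"
      using vanish
    proof eventually_elim
      case (elim x)
      show ?case
      proof (cases "f x = 0")
        case False
        obtain N :: nat where "cmod (g x) < real N * cmod (f x)"
          using reals_Archimedean2[of "cmod (g x) / cmod (f x)"] False
          by (auto simp: divide_less_eq)
        then have "cmod (g x) \<le> real m * cmod (f x)" if "N \<le> m" for m
          using that mult_right_mono[of "real N" "real m" "cmod (f x)"] by simp
        then show ?thesis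
          by (intro tendsto_eventually eventually_sequentiallyI[of N]) auto
      qed (use elim in simp)
    qed
  qed (use g f in \<open>auto simp: borel_measurable_integrable\<close>)
  then show ?thesis
    by simp
qed

lemma L1norm_diff_aligned:
  fixes f g :: "real \<Rightarrow> complex"
  assumes f: "integrable lborel f" and g: "integrable lborel g"
    and aligned: "AE x in lborel. alignment_defect f g x = 0" and s: "0 < s"
  shows "L1norm (\<lambda>x. f x - g x / complex_of_real s)
    = L1norm f - (L1norm g - 2 * (LINT x|lborel. max 0 (cmod (g x) - s * cmod (f x)))) / s"
proof -
  have [measurable]: "f \<in> borel_measurable lborel" "g \<in> borel_measurable lborel"
    using f g by (auto intro: borel_measurable_integrable)
  have excess_int: "integrable lborel (\<lambda>x. max 0 (cmod (g x) - s * cmod (f x)))"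
    by (rule Bochner_Integration.integrable_bound[OF integrable_norm[OF g]]) (use s in auto)
  have "AE x in lborel. cmod (f x - g x / complex_of_real s)
      = cmod (f x) - (cmod (g x) - 2 * max 0 (cmod (g x) - s * cmod (f x))) / s"
    using aligned by eventually_elim (intro cmod_diff_aligned alignment_defect_eq_0_imp_aligned s)
  then have "L1norm (\<lambda>x. f x - g x / complex_of_real s)
      = (LINT x|lborel. cmod (f x) - (cmod (g x) - 2 * max 0 (cmod (g x) - s * cmod (f x))) / s)"
    unfolding L1norm_def by (intro integral_cong_AE) auto
  also have "\<dots> = L1norm f - (L1norm g - 2 * (LINT x|lborel. max 0 (cmod (g x) - s * cmod (f x)))) / s"
    unfolding L1norm_def using f g excess_int by simp
  finally show ?thesis .
qed

lemma Re_functional_ge_aligned: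
  assumes lin: "clin_functional_on_B1 \<sigma> \<Phi>"
    and bound: "\<And>u. u \<in> B1 \<sigma> \<Longrightarrow> cmod (\<Phi> u) \<le> L1norm u" and "\<Phi> f = 1"
    and f: "f \<in> B1 \<sigma>" "L1norm f = 1" and g: "g \<in> B1 \<sigma>" "L1norm g = 1"
    and aligned: "AE x in lborel. alignment_defect f g x = 0" and s: "0 < s"
  shows "1 - 2 * (LINT x|lborel. max 0 (cmod (g x) - s * cmod (f x))) \<le> Re (\<Phi> g)"
proof -
  define c where "c = - 1 / complex_of_real s"
  have u: "(\<lambda>x. f x - g x / complex_of_real s) = (\<lambda>x. f x + c * g x)"
    by (simp add: c_def fun_eq_iff)
  have u_B1: "(\<lambda>x. f x + c * g x) \<in> B1 \<sigma>"
    by (intro B1_add B1_scale f g)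
  have "\<Phi> (\<lambda>x. f x + c * g x) = 1 + c * \<Phi> g"
    using lin f g B1_scale[OF g(1)] \<open>\<Phi> f = 1\<close> by (simp add: clin_functional_on_B1_def)
  then have "1 - Re (\<Phi> g) / s = Re (\<Phi> (\<lambda>x. f x + c * g x))"
    by (simp add: c_def)
  also have "\<dots> \<le> L1norm (\<lambda>x. f x + c * g x)"
    using bound[OF u_B1] complex_Re_le_cmod order_trans by blast
  also have "\<dots> = 1 - (1 - 2 * (LINT x|lborel. max 0 (cmod (g x) - s * cmod (f x)))) / s"
    using L1norm_diff_aligned[OF _ _ aligned s] f g unfolding u by (simp add: B1_def)
  finally show ?thesis
    using s by (simp add: divide_le_cancel)
qed

lemma exposed_point_eq_if_aligned:
  assumes exposed: "exposed_point \<sigma> f" and g: "g \<in> DB1 \<sigma>" "L1norm g = 1"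
    and aligned: "AE x in lborel. alignment_defect f g x = 0"
  shows "g = f"
proof -
  obtain \<Phi> where lin: "clin_functional_on_B1 \<sigma> \<Phi>"
    and bound: "\<And>u. u \<in> B1 \<sigma> \<Longrightarrow> cmod (\<Phi> u) \<le> L1norm u"
    and "\<Phi> f = 1" and strict: "\<And>u. u \<in> DB1 \<sigma> \<Longrightarrow> u \<noteq> f \<Longrightarrow> Re (\<Phi> u) < 1"
    using exposed unfolding exposed_point_def by blast
  have f_B1: "f \<in> B1 \<sigma>" and g_B1: "g \<in> B1 \<sigma>"
    using exposed g by (auto simp: exposed_point_def DB1_def)
  define excess where "excess m = (LINT x|lborel. max 0 (cmod (g x) - real m * cmod (f x)))" for m :: nat
  have "\<forall>\<^sub>F m in sequentially. 1 - 2 * excess m \<le> Re (\<Phi> g)"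
    unfolding excess_def using exposed_point_L1norm[OF exposed] g(2)
    by (intro eventually_sequentiallyI[of 1] Re_functional_ge_aligned[OF lin bound \<open>\<Phi> f = 1\<close>
        f_B1 _ g_B1 _ aligned]) auto
  moreover have "excess \<longlonglongrightarrow> 0"
    unfolding excess_def using f_B1 g_B1 aligned
    by (intro integral_excess_tendsto_0)
      (auto simp: B1_def elim!: eventually_mono dest: alignment_defect_eq_0_imp_aligned)
  then have "(\<lambda>m. 1 - 2 * excess m) \<longlonglongrightarrow> 1"
    by (auto intro!: tendsto_eq_intros)
  ultimately have "1 \<le> Re (\<Phi> g)"
    by (intro tendsto_le[OF trivial_limit_sequentially tendsto_const])
  then show "g = f"
    using strict[OF g(1)] by force
qed

lemma integral_alignment_defect_tendsto_0:
  fixes u :: "nat \<Rightarrow> real \<Rightarrow> complex"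
  assumes f: "f \<in> borel_measurable lborel"
    and u: "\<And>n. integrable lborel (u n)" "\<And>n. L1norm (u n) \<le> 1"
    and lim: "(\<lambda>n. Phi f (u n)) \<longlonglongrightarrow> 1"
  shows "(\<lambda>n. integral\<^sup>L lborel (alignment_defect f (u n))) \<longlonglongrightarrow> 0"
proof (rule tendsto_sandwich[OF _ _ tendsto_const])
  show "(\<lambda>n. 1 - Re (Phi f (u n))) \<longlonglongrightarrow> 0"
    using tendsto_diff[OF tendsto_const tendsto_Re[OF lim], of 1] by simp
  show "\<forall>\<^sub>F n in sequentially. 0 \<le> integral\<^sup>L lborel (alignment_defect f (u n))"
    by (intro always_eventually allI integral_nonneg_AE AE_I2 alignment_defect_nonneg)
  show "\<forall>\<^sub>F n in sequentially.
      integral\<^sup>L lborel (alignment_defect f (u n)) \<le> 1 - Re (Phi f (u n))"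
    using u f by (intro always_eventually) (simp add: integral_alignment_defect)
qed

lemma exposed_point_aligned_eq_scaled:
  assumes exposed: "exposed_point \<sigma> f" and u: "u \<in> DB1 \<sigma>"
    and aligned: "AE x in lborel. alignment_defect f u x = 0"
  shows "\<exists>\<alpha>::real. 0 \<le> \<alpha> \<and> \<alpha> \<le> 1 \<and> u = (\<lambda>x. complex_of_real \<alpha> * f x)"
proof -
  have u_B1: "u \<in> B1 \<sigma>" and u_norm: "L1norm u \<le> 1"
    using u by (auto simp: DB1_def)
  consider "L1norm u = 0" | "0 < L1norm u"
    using L1norm_nonneg[of u] by linarith
  then show ?thesis
  proof cases
    case 1
    then show ?thesis
      using u_B1 L1norm_eq_0_imp_eq_0[of u] by (auto simp: B1_def)
  next
    case 2
    define a where "a = L1norm u"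
    define g where "g x = complex_of_real (1 / a) * u x" for x
    have "0 \<le> 1 / a"
      using 2 by (simp add: a_def)
    have "L1norm g = 1"
      unfolding g_def[abs_def] L1norm_scale using 2 by (simp add: a_def norm_divide)
    moreover have "g \<in> B1 \<sigma>"
      unfolding g_def[abs_def] by (rule B1_scale[OF u_B1])
    moreover from aligned have "AE x in lborel. alignment_defect f g x = 0"
      unfolding g_def[abs_def]
      by eventually_elim (simp only: alignment_defect_scale[OF \<open>0 \<le> 1 / a\<close>] mult_zero_right)
    ultimately have "g = f"
      using exposed exposed_point_eq_if_aligned by (auto simp: DB1_def)
    moreover have "u = (\<lambda>x. complex_of_real a * g x)"
      using 2 by (simp add: fun_eq_iff g_def a_def)
    moreover have "0 \<le> a" "a \<le> 1"
      using 2 u_norm by (simp_all add: a_def)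
    ultimately show ?thesis
      by blast
  qed
qed

theorem lemma4p5:
  fixes \<sigma> :: real and f f0 :: "real \<Rightarrow> complex" and fn :: "nat \<Rightarrow> real \<Rightarrow> complex"
  assumes "0 < \<sigma>"
    and "exposed_point \<sigma> f"
    and "\<And>n. fn n \<in> DB1 \<sigma>"
    and "(\<lambda>n. Phi f (fn n)) \<longlonglongrightarrow> 1"
    and "f0 \<in> DB1 \<sigma>"
    and "\<And>K. compact K \<Longrightarrow> uniform_limit K fn f0 sequentially"
  shows "\<exists>\<alpha>::real. 0 \<le> \<alpha> \<and> \<alpha> \<le> 1 \<and> f0 = (\<lambda>x. complex_of_real \<alpha> * f x)"
proof -
  have f_meas: "f \<in> borel_measurable lborel"
    using assms(2) by (auto simp: exposed_point_def DB1_def B1_def)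
  have fn_int: "integrable lborel (fn n)" and fn_norm: "L1norm (fn n) \<le> 1" for n
    using assms(3)[of n] by (auto simp: DB1_def B1_def)
  have f0_int: "integrable lborel f0"
    using assms(5) by (auto simp: DB1_def B1_def)
  have "(\<lambda>n. integral\<^sup>L lborel (alignment_defect f (fn n))) \<longlonglongrightarrow> 0"
    using f_meas fn_int fn_norm assms(4) by (rule integral_alignment_defect_tendsto_0)
  then have "AE x in lborel. alignment_defect f f0 x = 0"
    by (rule AE_alignment_defect_eq_0[OF f_meas fn_int f0_int _ assms(6)])
  then show ?thesis
    using assms(2,5) by (intro exposed_point_aligned_eq_scaled)
qed

end
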